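(* Let $G=G_+G_-$ be a unique factorization of a finite group $G$, let $\xi,\eta:G_+\to G_-$ be maps and $r:G_+\times G_+\to\mathbb R_{>0}$ a function such that \[ R=\sum_{u,v\in G_+} r(u,v)\,\{u(\eta(v)^{u})^{-1}\}\otimes\{v\,\xi(u)\} \] is a positive quasi-triangular structure on $H(G;G_+,G_-)$. Then $r(u,v)=1$ for all $u,v\in G_+$.
   Context: A unique factorization $G=G_+G_-$ consists of subgroups $G_+,G_-$ such that every $g\in G$ is uniquely $g=g_+g_-$ with $g_+\in G_+$, $g_-\in G_-$. For $u\in G_+$, $x\in G_-$ define ${}^u x\in G_-$, $u^x\in G_+$, ${}^x u\in G_+$, $x^u\in G_-$ by $ux=({}^u x)(u^x)$ and $xu=({}^x u)(x^u)$. $H(G;G_+,G_-)$ is the complex vector space with basis $\{g\}$, $g\in G$, and Hopf algebra structure: $\{g\}\{h\}=\delta_{g_+^{\,g_-},\,h_+}\{g h_-\}$; unit $1=\sum_{u\in G_+}\{u\}$; $\Delta\{g\}=\sum_{h\in G_+}\{g_+h^{-1}({}^{h}g_-)\}\otimes\{h g_-\}$; $\varepsilon\{g\}=\delta_{g_+,e}$; $S\{g\}=\{g^{-1}\}$. A quasi-triangular structure on a Hopf algebra $H$ is an invertible $R\in H\otimes H$ with $\tau\Delta(a)=R\Delta(a)R^{-1}$ for all $a$ ($\tau$ the flip), $(\Delta\otimes\mathrm{id})R=R_{13}R_{23}$, $(\mathrm{id}\otimes\Delta)R=R_{13}R_{12}$, and $(\varepsilon\otimes\mathrm{id})R=(\mathrm{id}\otimes\varepsilon)R=1$.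 An element of $H(G;G_+,G_-)^{\otimes 2}$ is positive if it is a linear combination of the $\{g\}\otimes\{h\}$ with non-negative real coefficients. *)

theory Defs
  imports "HOL-Algebra.Group" Complex_Main
begin

definition unique_factorization :: "('a,'b) monoid_scheme \<Rightarrow> 'a set \<Rightarrow> 'a set \<Rightarrow> bool" where
  "unique_factorization G Gp Gm \<longleftrightarrow> subgroup Gp G \<and> subgroup Gm G \<and>
     (\<forall>g\<in>carrier G. \<exists>!p. fst p \<in> Gp \<and> snd p \<in> Gm \<and> g = fst p \<otimes>\<^bsub>G\<^esub> snd p)"

definition fp :: "('a,'b) monoid_scheme \<Rightarrow> 'a set \<Rightarrow> 'a set \<Rightarrow> 'a \<Rightarrow> 'a" where
  "fp G Gp Gm g = (THE u. u \<in> Gp \<and> (\<exists>x\<in>Gm. g = u \<otimes>\<^bsub>G\<^esub> x))"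
definition fm :: "('a,'b) monoid_scheme \<Rightarrow> 'a set \<Rightarrow> 'a set \<Rightarrow> 'a \<Rightarrow> 'a" where
  "fm G Gp Gm g = (THE x. x \<in> Gm \<and> (\<exists>u\<in>Gp. g = u \<otimes>\<^bsub>G\<^esub> x))"
definition gm :: "('a,'b) monoid_scheme \<Rightarrow> 'a set \<Rightarrow> 'a set \<Rightarrow> 'a \<Rightarrow> 'a" where
  "gm G Gp Gm g = (THE x. x \<in> Gm \<and> (\<exists>u\<in>Gp. g = x \<otimes>\<^bsub>G\<^esub> u))"
definition gp :: "('a,'b) monoid_scheme \<Rightarrow> 'a set \<Rightarrow> 'a set \<Rightarrow> 'a \<Rightarrow> 'a" where
  "gp G Gp Gm g = (THE u. u \<in> Gp \<and> (\<exists>x\<in>Gm. g = x \<otimes>\<^bsub>G\<^esub> u))"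

(* Actions: u x = (^u x)(u^x) and x u = (^x u)(x^u), for u in G+, x in G- *)
definition lact_pm where "lact_pm G Gp Gm u x = gm G Gp Gm (u \<otimes>\<^bsub>G\<^esub> x)"
definition ract_pm where "ract_pm G Gp Gm u x = gp G Gp Gm (u \<otimes>\<^bsub>G\<^esub> x)"
definition lact_mp where "lact_mp G Gp Gm x u = fp G Gp Gm (x \<otimes>\<^bsub>G\<^esub> u)"
definition ract_mp where "ract_mp G Gp Gm x u = fm G Gp Gm (x \<otimes>\<^bsub>G\<^esub> u)"

text \<open>Elements of H(G;G+,G-) are coefficient functions 'a \<Rightarrow> complex (on the basis {g}, g in carrier G);
  elements of H\<otimes>H and H\<otimes>H\<otimes>H are coefficient functions on pairs / triples.\<close>

text \<open>Structure constants: coefficient of {k} in {g}{h}.\<close>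
definition mcoef :: "('a,'b) monoid_scheme \<Rightarrow> 'a set \<Rightarrow> 'a set \<Rightarrow> 'a \<Rightarrow> 'a \<Rightarrow> 'a \<Rightarrow> complex" where
  "mcoef G Gp Gm g h k =
     (if ract_pm G Gp Gm (fp G Gp Gm g) (fm G Gp Gm g) = fp G Gp Gm h
         \<and> k = g \<otimes>\<^bsub>G\<^esub> fm G Gp Gm h then 1 else 0)"

text \<open>Coefficient of {k1}\<otimes>{k2} in \<Delta>{g}.\<close>
definition dcoef :: "('a,'b) monoid_scheme \<Rightarrow> 'a set \<Rightarrow> 'a set \<Rightarrow> 'a \<Rightarrow> 'a \<Rightarrow> 'a \<Rightarrow> complex" where
  "dcoef G Gp Gm g k1 k2 = (\<Sum>h\<in>Gp.
     (if k1 = fp G Gp Gm g \<otimes>\<^bsub>G\<^esub> inv\<^bsub>G\<^esub> h \<otimes>\<^bsub>G\<^esub> lact_pm G Gp Gm h (fm G Gp Gm g)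
         \<and> k2 = h \<otimes>\<^bsub>G\<^esub> fm G Gp Gm g then 1 else 0))"

definition hcounit :: "('a,'b) monoid_scheme \<Rightarrow> 'a set \<Rightarrow> 'a set \<Rightarrow> 'a \<Rightarrow> complex" where
  "hcounit G Gp Gm g = (if fp G Gp Gm g = \<one>\<^bsub>G\<^esub> then 1 else 0)"

definition hunit :: "'a set \<Rightarrow> 'a \<Rightarrow> complex" where
  "hunit Gp k = (if k \<in> Gp then 1 else 0)"

definition btens2 :: "'a \<Rightarrow> 'a \<Rightarrow> 'a \<times> 'a \<Rightarrow> complex" where
  "btens2 a b = (\<lambda>k. if k = (a, b) then 1 else 0)"

definition mul2 :: "('a,'b) monoid_scheme \<Rightarrow> 'a set \<Rightarrow> 'a set \<Rightarrow> ('a \<times> 'a \<Rightarrow> complex) \<Rightarrow> ('a \<times> 'a \<Rightarrow> complex) \<Rightarrow> 'a \<times> 'a \<Rightarrow> complex" where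
  "mul2 G Gp Gm X Y = (\<lambda>(k1,k2). \<Sum>g1\<in>carrier G. \<Sum>g2\<in>carrier G. \<Sum>h1\<in>carrier G. \<Sum>h2\<in>carrier G.
      X (g1,g2) * Y (h1,h2) * mcoef G Gp Gm g1 h1 k1 * mcoef G Gp Gm g2 h2 k2)"

definition mul3 :: "('a,'b) monoid_scheme \<Rightarrow> 'a set \<Rightarrow> 'a set \<Rightarrow> ('a \<times> 'a \<times> 'a \<Rightarrow> complex) \<Rightarrow> ('a \<times> 'a \<times> 'a \<Rightarrow> complex) \<Rightarrow> 'a \<times> 'a \<times> 'a \<Rightarrow> complex" where
  "mul3 G Gp Gm X Y = (\<lambda>(k1,k2,k3). \<Sum>g1\<in>carrier G. \<Sum>g2\<in>carrier G. \<Sum>g3\<in>carrier G.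
      \<Sum>h1\<in>carrier G. \<Sum>h2\<in>carrier G. \<Sum>h3\<in>carrier G.
      X (g1,g2,g3) * Y (h1,h2,h3) * mcoef G Gp Gm g1 h1 k1 * mcoef G Gp Gm g2 h2 k2 * mcoef G Gp Gm g3 h3 k3)"

definition hcomult :: "('a,'b) monoid_scheme \<Rightarrow> 'a set \<Rightarrow> 'a set \<Rightarrow> ('a \<Rightarrow> complex) \<Rightarrow> 'a \<times> 'a \<Rightarrow> complex" where
  "hcomult G Gp Gm a = (\<lambda>(k1,k2). \<Sum>g\<in>carrier G. a g * dcoef G Gp Gm g k1 k2)"

definition quasi_triangular :: "('a,'b) monoid_scheme \<Rightarrow> 'a set \<Rightarrow> 'a set \<Rightarrow> ('a \<times> 'a \<Rightarrow> complex) \<Rightarrow> bool" where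
  "quasi_triangular G Gp Gm R \<longleftrightarrow>
     (\<forall>k1 k2. (k1 \<notin> carrier G \<or> k2 \<notin> carrier G) \<longrightarrow> R (k1,k2) = 0) \<and>
     (\<exists>Rinv. (\<forall>k1 k2. (k1 \<notin> carrier G \<or> k2 \<notin> carrier G) \<longrightarrow> Rinv (k1,k2) = 0) \<and>
        mul2 G Gp Gm R Rinv = (\<lambda>(k1,k2). hunit Gp k1 * hunit Gp k2) \<and>
        mul2 G Gp Gm Rinv R = (\<lambda>(k1,k2). hunit Gp k1 * hunit Gp k2) \<and>
        (\<forall>a. (\<forall>g. g \<notin> carrier G \<longrightarrow> a g = 0) \<longrightarrow>
           (\<lambda>(k1,k2). hcomult G Gp Gm a (k2,k1)) = mul2 G Gp Gm (mul2 G Gp Gm R (hcomult G Gp Gm a)) Rinv)) \<and>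
     (\<lambda>(k1,k2,k3). \<Sum>g\<in>carrier G. R (g,k3) * dcoef G Gp Gm g k1 k2)
        = mul3 G Gp Gm (\<lambda>(k1,k2,k3). R (k1,k3) * hunit Gp k2) (\<lambda>(k1,k2,k3). hunit Gp k1 * R (k2,k3)) \<and>
     (\<lambda>(k1,k2,k3). \<Sum>g\<in>carrier G. R (k1,g) * dcoef G Gp Gm g k2 k3)
        = mul3 G Gp Gm (\<lambda>(k1,k2,k3). R (k1,k3) * hunit Gp k2) (\<lambda>(k1,k2,k3). R (k1,k2) * hunit Gp k3) \<and>
     (\<lambda>k. \<Sum>g\<in>carrier G. hcounit G Gp Gm g * R (g,k)) = hunit Gp \<and>
     (\<lambda>k. \<Sum>g\<in>carrier G. R (k,g) * hcounit G Gp Gm g) = hunit Gp"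

definition positive2 :: "('a \<times> 'a \<Rightarrow> complex) \<Rightarrow> bool" where
  "positive2 X \<longleftrightarrow> (\<forall>k. Im (X k) = 0 \<and> Re (X k) \<ge> 0)"

end

theory Submission
  imports Defs
begin

(* Write R = sum r(u,v) {a(u,v)} (x) {b(u,v)} with a(u,v) = u (eta(v)^u)^-1 and b(u,v) = v xi(u).
   The G+-parts of a(u,v) and b(u,v) are u and v, so each basis tensor occurs in R at most once.
   At suitably chosen basis tensors both sides of (Delta (x) id) R = R13 R23 and of
   (id (x) Delta) R = R13 R12 reduce to a single term, which yields
     r(w h, v) = r(w, v) r(h, v^xi(w))   and   r(u, v) = r(u, k) r(u^x, v k^-1),  x = a(u,k)-.
   Since v |-> v^xi(w) permutes G+, the first identity makes D(u) = prod_v r(u,v) a homomorphism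
   from the finite group G+ to the positive reals, hence D = 1; the product over v of the second
   identity then gives r(u,k)^|G+| = 1. *)

lemma sum_eq_single:
  assumes "finite S" "a \<in> S" "\<And>x. x \<in> S \<Longrightarrow> x \<noteq> a \<Longrightarrow> f x = 0"
  shows "sum f S = f a"
  using assms sum.mono_neutral_left[of S "{a}" f] by simp

lemma sum_sum_eq_single:
  assumes "finite S" "a \<in> S" "b \<in> S"
    and "\<And>x y. x \<in> S \<Longrightarrow> y \<in> S \<Longrightarrow> f x y \<noteq> 0 \<Longrightarrow> x = a \<and> y = b"
  shows "(\<Sum>x\<in>S. \<Sum>y\<in>S. f x y) = f a b"
proof -
  have "(\<Sum>x\<in>S. \<Sum>y\<in>S. f x y) = (\<Sum>y\<in>S. f a y)"
    by (rule sum_eq_single[OF assms(1,2)], rule sum.neutral) (use assms(4) in blast)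
  also have "\<dots> = f a b"
    by (rule sum_eq_single[OF assms(1,3)]) (use assms(2,4) in blast)
  finally show ?thesis .
qed

lemma sum_regroup_R13_R23:
  fixes X :: "'a \<Rightarrow> 'a \<Rightarrow> 'c::comm_semiring_1"
  shows "(\<Sum>g1\<in>S. \<Sum>g2\<in>S. \<Sum>g3\<in>S. \<Sum>h1\<in>S. \<Sum>h2\<in>S. \<Sum>h3\<in>S.
      X g1 g3 * a g2 * (b h1 * Y h2 h3) * m1 g1 h1 * m2 g2 h2 * m3 g3 h3)
    = (\<Sum>g3\<in>S. \<Sum>h3\<in>S. (\<Sum>g1\<in>S. X g1 g3 * (\<Sum>h1\<in>S. b h1 * m1 g1 h1)) *
        (\<Sum>h2\<in>S. Y h2 h3 * (\<Sum>g2\<in>S. a g2 * m2 g2 h2)) * m3 g3 h3)"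
  unfolding sum_distrib_left sum_distrib_right sum.cartesian_product
  by (rule sum.reindex_bij_witness[where i="\<lambda>(g3,h3,(h2,g2),g1,h1). (g1,g2,g3,h1,h2,h3)"
        and j="\<lambda>(g1,g2,g3,h1,h2,h3). (g3,h3,(h2,g2),g1,h1)"]) (auto simp: ac_simps)

lemma sum_regroup_R13_R12:
  fixes X :: "'a \<Rightarrow> 'a \<Rightarrow> 'c::comm_semiring_1"
  shows "(\<Sum>g1\<in>S. \<Sum>g2\<in>S. \<Sum>g3\<in>S. \<Sum>h1\<in>S. \<Sum>h2\<in>S. \<Sum>h3\<in>S.
      X g1 g3 * a g2 * (Y h1 h2 * b h3) * m1 g1 h1 * m2 g2 h2 * m3 g3 h3)
    = (\<Sum>g1\<in>S. \<Sum>h1\<in>S. (\<Sum>g3\<in>S. X g1 g3 * (\<Sum>h3\<in>S. b h3 * m3 g3 h3)) *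
        (\<Sum>h2\<in>S. Y h1 h2 * (\<Sum>g2\<in>S. a g2 * m2 g2 h2)) * m1 g1 h1)"
  unfolding sum_distrib_left sum_distrib_right sum.cartesian_product
  by (rule sum.reindex_bij_witness[where i="\<lambda>(g1,h1,(h2,g2),g3,h3). (g1,g2,g3,h1,h2,h3)"
        and j="\<lambda>(g1,g2,g3,h1,h2,h3). (g1,h1,(h2,g2),g3,h3)"]) (auto simp: ac_simps)

lemma pos_real_power_eq_1:
  fixes x :: real
  assumes "0 < x" "0 < n" "x ^ n = 1"
  shows "x = 1"
  using assms power_eq_iff_eq_base[of n x 1] by simp

locale factorized_group = group G for G (structure) +
  fixes P M :: "'a set"
  assumes unique_factorization: "unique_factorization G P M"
begin

sublocale P: subgroup P G
  using unique_factorization unfolding unique_factorization_def by blast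

sublocale M: subgroup M G
  using unique_factorization unfolding unique_factorization_def by blast

lemma factorization_exists:
  assumes "g \<in> carrier G"
  obtains p m where "p \<in> P" "m \<in> M" "g = p \<otimes> m"
  using assms unique_factorization unfolding unique_factorization_def by (metis prod.collapse)

lemma factorization_unique:
  assumes "p \<in> P" "p' \<in> P" "m \<in> M" "m' \<in> M" "p \<otimes> m = p' \<otimes> m'"
  shows "p = p'" "m = m'"
proof -
  have "\<exists>!q. fst q \<in> P \<and> snd q \<in> M \<and> p \<otimes> m = fst q \<otimes> snd q"
    using assms unique_factorization unfolding unique_factorization_def by simp
  then have "(p, m) = (p', m')"
    using assms by (metis fst_conv snd_conv)
  then show "p = p'" "m = m'" by simp_all
qed

lemma reverse_factorization_unique:
  assumes "p \<in> P" "p' \<in> P" "m \<in> M" "m' \<in> M" "m \<otimes> p = m' \<otimes> p'"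
  shows "p = p'" "m = m'"
proof -
  have "inv p \<otimes> inv m = inv p' \<otimes> inv m'"
    using assms by (metis P.mem_carrier M.mem_carrier inv_mult_group)
  then have "inv p = inv p'" "inv m = inv m'"
    using assms by (auto intro: factorization_unique)
  then show "p = p'" "m = m'"
    using assms by (auto dest: inj_onD[OF inv_inj])
qed

lemma fp_mult [simp]: "p \<in> P \<Longrightarrow> m \<in> M \<Longrightarrow> fp G P M (p \<otimes> m) = p"
  unfolding fp_def by (rule the_equality) (auto dest: factorization_unique)

lemma fm_mult [simp]: "p \<in> P \<Longrightarrow> m \<in> M \<Longrightarrow> fm G P M (p \<otimes> m) = m"
  unfolding fm_def by (rule the_equality) (auto dest: factorization_unique)

lemma gp_mult [simp]: "m \<in> M \<Longrightarrow> p \<in> P \<Longrightarrow> gp G P M (m \<otimes> p) = p"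
  unfolding gp_def by (rule the_equality) (auto dest: reverse_factorization_unique)

lemma gm_mult [simp]: "m \<in> M \<Longrightarrow> p \<in> P \<Longrightarrow> gm G P M (m \<otimes> p) = m"
  unfolding gm_def by (rule the_equality) (auto dest: reverse_factorization_unique)

lemma fp_closed [simp]: "g \<in> carrier G \<Longrightarrow> fp G P M g \<in> P"
  and fm_closed [simp]: "g \<in> carrier G \<Longrightarrow> fm G P M g \<in> M"
  and fp_fm [simp]: "g \<in> carrier G \<Longrightarrow> fp G P M g \<otimes> fm G P M g = g"
  by (auto elim: factorization_exists)

lemma fp_of_P [simp]: "p \<in> P \<Longrightarrow> fp G P M p = p"
  and fm_of_P [simp]: "p \<in> P \<Longrightarrow> fm G P M p = \<one>"
  using fp_mult[of p \<one>] fm_mult[of p \<one>] by simp_all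

lemma reverse_factorization_exists:
  assumes "g \<in> carrier G"
  obtains m p where "m \<in> M" "p \<in> P" "g = m \<otimes> p"
proof -
  obtain p m where "p \<in> P" "m \<in> M" "inv g = p \<otimes> m"
    using assms factorization_exists[of "inv g"] by blast
  then have "g = inv m \<otimes> inv p"
    using assms by (metis P.mem_carrier M.mem_carrier inv_inv inv_mult_group)
  then show thesis
    using that \<open>p \<in> P\<close> \<open>m \<in> M\<close> by blast
qed

lemma gm_closed [simp]: "g \<in> carrier G \<Longrightarrow> gm G P M g \<in> M"
  and gp_closed [simp]: "g \<in> carrier G \<Longrightarrow> gp G P M g \<in> P"
  and gm_gp [simp]: "g \<in> carrier G \<Longrightarrow> gm G P M g \<otimes> gp G P M g = g"
  by (auto elim: reverse_factorization_exists)

lemma ract_pm_closed [simp]: "v \<in> P \<Longrightarrow> x \<in> M \<Longrightarrow> ract_pm G P M v x \<in> P"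
  and lact_pm_closed [simp]: "v \<in> P \<Longrightarrow> x \<in> M \<Longrightarrow> lact_pm G P M v x \<in> M"
  and lact_ract_pm: "v \<in> P \<Longrightarrow> x \<in> M \<Longrightarrow> lact_pm G P M v x \<otimes> ract_pm G P M v x = v \<otimes> x"
  and ract_mp_closed [simp]: "x \<in> M \<Longrightarrow> v \<in> P \<Longrightarrow> ract_mp G P M x v \<in> M"
  unfolding ract_pm_def lact_pm_def ract_mp_def by simp_all

lemma ract_pm_one [simp]: "v \<in> P \<Longrightarrow> ract_pm G P M v \<one> = v"
  unfolding ract_pm_def using gp_mult[of \<one> v] by simp

lemma ract_pm_ract_pm_inv:
  assumes "v \<in> P" "x \<in> M"
  shows "ract_pm G P M (ract_pm G P M v x) (inv x) = v"
proof -
  define m w where "m = lact_pm G P M v x" and "w = ract_pm G P M v x"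
  have mw: "m \<in> M" "w \<in> P" "m \<otimes> w = v \<otimes> x"
    using assms lact_ract_pm unfolding m_def w_def by simp_all
  then have "w = inv m \<otimes> (v \<otimes> x)"
    using assms by (simp add: inv_solve_left)
  then have "w \<otimes> inv x = inv m \<otimes> v"
    using assms mw by (simp add: m_assoc)
  then show ?thesis
    using assms mw unfolding ract_pm_def w_def by simp
qed

lemma bij_betw_ract_pm: "x \<in> M \<Longrightarrow> bij_betw (\<lambda>v. ract_pm G P M v x) P P"
  using ract_pm_ract_pm_inv[of _ x] ract_pm_ract_pm_inv[of _ "inv x"]
  by (intro bij_betw_byWitness[where f'="\<lambda>v. ract_pm G P M v (inv x)"]) auto

lemma bij_betw_P_mult_right: "k \<in> P \<Longrightarrow> bij_betw (\<lambda>v. v \<otimes> k) P P"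
  by (intro bij_betw_byWitness[where f'="\<lambda>v. v \<otimes> inv k"]) (auto simp: m_assoc)

lemma mcoef_nonzero:
  assumes "mcoef G P M g h k \<noteq> 0"
  shows "mcoef G P M g h k = 1" "fp G P M h = ract_pm G P M (fp G P M g) (fm G P M g)"
    "k = g \<otimes> fm G P M h"
  using assms unfolding mcoef_def by (simp_all split: if_splits)

lemma fp_mcoef_nonzero:
  assumes "g \<in> carrier G" "h \<in> carrier G" "mcoef G P M g h k \<noteq> 0"
  shows "fp G P M k = fp G P M g"
proof -
  have "k = fp G P M g \<otimes> (fm G P M g \<otimes> fm G P M h)"
    using assms mcoef_nonzero(3)[OF assms(3)] by (metis fp_fm fp_closed fm_closed P.mem_carrier M.mem_carrier m_assoc)
  then show ?thesis
    using assms by simp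
qed

end

locale finite_factorized_group = factorized_group G P M for G (structure) and P M +
  assumes finite_carrier: "finite (carrier G)"
begin

lemma finite_P: "finite P"
  using finite_subset[OF P.subset finite_carrier] .

lemma sum_hunit_mcoef_right:
  assumes "g \<in> carrier G"
  shows "(\<Sum>h\<in>carrier G. hunit P h * mcoef G P M g h k) = of_bool (k = g)"
proof -
  define u where "u = ract_pm G P M (fp G P M g) (fm G P M g)"
  have u: "u \<in> P"
    using assms unfolding u_def by simp
  have "(\<Sum>h\<in>carrier G. hunit P h * mcoef G P M g h k) = hunit P u * mcoef G P M g u k"
    by (rule sum_eq_single[OF finite_carrier]) (use u in \<open>auto simp: hunit_def mcoef_def u_def\<close>)
  then show ?thesis
    using u assms by (simp add: hunit_def mcoef_def u_def)
qed

lemma sum_hunit_mcoef_left: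
  assumes "h \<in> carrier G"
  shows "(\<Sum>g\<in>carrier G. hunit P g * mcoef G P M g h k) = of_bool (k = h)"
proof -
  have "(\<Sum>g\<in>carrier G. hunit P g * mcoef G P M g h k) = hunit P (fp G P M h) * mcoef G P M (fp G P M h) h k"
    by (rule sum_eq_single[OF finite_carrier]) (use assms in \<open>auto simp: hunit_def mcoef_def\<close>)
  then show ?thesis
    using assms by (simp add: hunit_def mcoef_def)
qed

lemma mul3_R13_R23:
  assumes "k1 \<in> carrier G" "k2 \<in> carrier G"
  shows "mul3 G P M (\<lambda>(a,b,c). X (a,c) * hunit P b) (\<lambda>(a,b,c). hunit P a * Y (b,c)) (k1,k2,k3)
    = (\<Sum>g\<in>carrier G. \<Sum>h\<in>carrier G. X (k1,g) * Y (k2,h) * mcoef G P M g h k3)"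
proof -
  have "mul3 G P M (\<lambda>(a,b,c). X (a,c) * hunit P b) (\<lambda>(a,b,c). hunit P a * Y (b,c)) (k1,k2,k3)
    = (\<Sum>g3\<in>carrier G. \<Sum>h3\<in>carrier G.
        (\<Sum>g1\<in>carrier G. X (g1,g3) * (\<Sum>h1\<in>carrier G. hunit P h1 * mcoef G P M g1 h1 k1)) *
        (\<Sum>h2\<in>carrier G. Y (h2,h3) * (\<Sum>g2\<in>carrier G. hunit P g2 * mcoef G P M g2 h2 k2)) *
        mcoef G P M g3 h3 k3)"
    unfolding mul3_def prod.case by (rule sum_regroup_R13_R23)
  also have "\<dots> = (\<Sum>g\<in>carrier G. \<Sum>h\<in>carrier G. X (k1,g) * Y (k2,h) * mcoef G P M g h k3)"
    using assms by (simp add: finite_carrier sum_hunit_mcoef_right sum_hunit_mcoef_left of_bool_def if_distrib cong: if_cong)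
  finally show ?thesis .
qed

lemma mul3_R13_R12:
  assumes "k2 \<in> carrier G" "k3 \<in> carrier G"
  shows "mul3 G P M (\<lambda>(a,b,c). X (a,c) * hunit P b) (\<lambda>(a,b,c). Y (a,b) * hunit P c) (k1,k2,k3)
    = (\<Sum>g\<in>carrier G. \<Sum>h\<in>carrier G. X (g,k3) * Y (h,k2) * mcoef G P M g h k1)"
proof -
  have "mul3 G P M (\<lambda>(a,b,c). X (a,c) * hunit P b) (\<lambda>(a,b,c). Y (a,b) * hunit P c) (k1,k2,k3)
    = (\<Sum>g1\<in>carrier G. \<Sum>h1\<in>carrier G.
        (\<Sum>g3\<in>carrier G. X (g1,g3) * (\<Sum>h3\<in>carrier G. hunit P h3 * mcoef G P M g3 h3 k3)) *
        (\<Sum>h2\<in>carrier G. Y (h1,h2) * (\<Sum>g2\<in>carrier G. hunit P g2 * mcoef G P M g2 h2 k2)) *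
        mcoef G P M g1 h1 k1)"
    unfolding mul3_def prod.case by (rule sum_regroup_R13_R12)
  also have "\<dots> = (\<Sum>g\<in>carrier G. \<Sum>h\<in>carrier G. X (g,k3) * Y (h,k2) * mcoef G P M g h k1)"
    using assms by (simp add: finite_carrier sum_hunit_mcoef_right sum_hunit_mcoef_left of_bool_def if_distrib cong: if_cong)
  finally show ?thesis .
qed

lemma dcoef_term_iff:
  assumes "g \<in> carrier G" "k1 \<in> carrier G" "k2 \<in> carrier G" "h \<in> P"
  shows "(k1 = fp G P M g \<otimes> inv h \<otimes> lact_pm G P M h (fm G P M g) \<and> k2 = h \<otimes> fm G P M g)
    \<longleftrightarrow> (h = fp G P M k2 \<and> g = fp G P M k1 \<otimes> k2 \<and> fm G P M k1 = lact_pm G P M (fp G P M k2) (fm G P M k2))"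
proof
  assume k: "k1 = fp G P M g \<otimes> inv h \<otimes> lact_pm G P M h (fm G P M g) \<and> k2 = h \<otimes> fm G P M g"
  then have "fp G P M k1 = fp G P M g \<otimes> inv h" "fm G P M k1 = lact_pm G P M h (fm G P M g)"
    "fp G P M k2 = h" "fm G P M k2 = fm G P M g"
    using assms by simp_all
  moreover have "g = (fp G P M g \<otimes> inv h) \<otimes> (h \<otimes> fm G P M g)"
    using assms by (simp add: m_assoc[symmetric] del: fp_fm) (simp add: m_assoc)
  ultimately show "h = fp G P M k2 \<and> g = fp G P M k1 \<otimes> k2 \<and> fm G P M k1 = lact_pm G P M (fp G P M k2) (fm G P M k2)"
    using k by simp
next
  assume k: "h = fp G P M k2 \<and> g = fp G P M k1 \<otimes> k2 \<and> fm G P M k1 = lact_pm G P M (fp G P M k2) (fm G P M k2)"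
  then have "g = (fp G P M k1 \<otimes> h) \<otimes> fm G P M k2"
    using assms by (metis fp_fm fp_closed fm_closed P.mem_carrier M.mem_carrier m_assoc)
  then have "fp G P M g = fp G P M k1 \<otimes> h" "fm G P M g = fm G P M k2"
    using assms by simp_all
  then show "k1 = fp G P M g \<otimes> inv h \<otimes> lact_pm G P M h (fm G P M g) \<and> k2 = h \<otimes> fm G P M g"
    using assms k by (simp add: m_assoc) (metis fp_fm)
qed

lemma dcoef_eq:
  assumes "g \<in> carrier G" "k1 \<in> carrier G" "k2 \<in> carrier G"
  shows "dcoef G P M g k1 k2
    = of_bool (g = fp G P M k1 \<otimes> k2 \<and> fm G P M k1 = lact_pm G P M (fp G P M k2) (fm G P M k2))"
proof -
  have "dcoef G P M g k1 k2 = (\<Sum>h\<in>P. of_bool (h = fp G P M k2 \<and> g = fp G P M k1 \<otimes> k2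
      \<and> fm G P M k1 = lact_pm G P M (fp G P M k2) (fm G P M k2)))"
    unfolding dcoef_def using assms by (intro sum.cong) (simp_all add: dcoef_term_iff)
  also have "\<dots> = of_bool (g = fp G P M k1 \<otimes> k2 \<and> fm G P M k1 = lact_pm G P M (fp G P M k2) (fm G P M k2))"
    using assms by (subst sum_eq_single[OF finite_P, of "fp G P M k2"]) auto
  finally show ?thesis .
qed

lemma sum_dcoef:
  assumes "k1 \<in> carrier G" "k2 \<in> carrier G"
  shows "(\<Sum>g\<in>carrier G. a g * dcoef G P M g k1 k2)
    = (if fm G P M k1 = lact_pm G P M (fp G P M k2) (fm G P M k2) then a (fp G P M k1 \<otimes> k2) else 0)"
  using assms by (simp add: dcoef_eq finite_carrier of_bool_def if_distrib cong: if_cong sum.cong)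

end

locale R_ansatz = finite_factorized_group G P M for G (structure) and P M +
  fixes \<xi> \<eta> :: "'a \<Rightarrow> 'a" and r :: "'a \<Rightarrow> 'a \<Rightarrow> real" and R :: "'a \<times> 'a \<Rightarrow> complex"
  assumes xi_closed: "\<forall>u\<in>P. \<xi> u \<in> M" and eta_closed: "\<forall>u\<in>P. \<eta> u \<in> M"
    and r_pos: "\<forall>u\<in>P. \<forall>v\<in>P. r u v > 0"
    and R_expansion: "R = (\<lambda>k. \<Sum>u\<in>P. \<Sum>v\<in>P. complex_of_real (r u v) *
      btens2 (u \<otimes> inv (ract_mp G P M (\<eta> v) u)) (v \<otimes> \<xi> u) k)"
begin

definition R_leg1 :: "'a \<Rightarrow> 'a \<Rightarrow> 'a" where
  "R_leg1 u v = u \<otimes> inv (ract_mp G P M (\<eta> v) u)"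

definition R_leg2 :: "'a \<Rightarrow> 'a \<Rightarrow> 'a" where
  "R_leg2 u v = v \<otimes> \<xi> u"

lemma xi_in_M [simp]: "u \<in> P \<Longrightarrow> \<xi> u \<in> M"
  using xi_closed by blast

lemma inv_ract_mp_eta_in_M [simp]: "u \<in> P \<Longrightarrow> v \<in> P \<Longrightarrow> inv (ract_mp G P M (\<eta> v) u) \<in> M"
  using eta_closed by simp

lemma fp_R_leg1 [simp]: "u \<in> P \<Longrightarrow> v \<in> P \<Longrightarrow> fp G P M (R_leg1 u v) = u"
  and fm_R_leg1 [simp]: "u \<in> P \<Longrightarrow> v \<in> P \<Longrightarrow> fm G P M (R_leg1 u v) = inv (ract_mp G P M (\<eta> v) u)"
  and fp_R_leg2 [simp]: "u \<in> P \<Longrightarrow> v \<in> P \<Longrightarrow> fp G P M (R_leg2 u v) = v"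
  and fm_R_leg2 [simp]: "u \<in> P \<Longrightarrow> v \<in> P \<Longrightarrow> fm G P M (R_leg2 u v) = \<xi> u"
  and R_leg1_closed [simp]: "u \<in> P \<Longrightarrow> v \<in> P \<Longrightarrow> R_leg1 u v \<in> carrier G"
  and R_leg2_closed [simp]: "u \<in> P \<Longrightarrow> v \<in> P \<Longrightarrow> R_leg2 u v \<in> carrier G"
  unfolding R_leg1_def R_leg2_def by simp_all

lemma R_eq_sum_legs: "R k = (\<Sum>u\<in>P. \<Sum>v\<in>P. complex_of_real (r u v) * btens2 (R_leg1 u v) (R_leg2 u v) k)"
  unfolding R_expansion R_leg1_def R_leg2_def ..

lemma R_at_legs:
  assumes "u \<in> P" "v \<in> P"
  shows "R (R_leg1 u v, R_leg2 u v) = complex_of_real (r u v)"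
  unfolding R_eq_sum_legs
proof (subst sum_sum_eq_single[OF finite_P assms])
  fix u' v' assume "u' \<in> P" "v' \<in> P"
    and "complex_of_real (r u' v') * btens2 (R_leg1 u' v') (R_leg2 u' v') (R_leg1 u v, R_leg2 u v) \<noteq> 0"
  then show "u' = u \<and> v' = v"
    using assms unfolding btens2_def by (auto split: if_splits dest: arg_cong[of _ _ "fp G P M"])
qed (simp add: btens2_def)

lemma R_nonzeroE:
  assumes "R (a, b) \<noteq> 0"
  obtains u v where "u \<in> P" "v \<in> P" "a = R_leg1 u v" "b = R_leg2 u v"
proof -
  obtain u where "u \<in> P"
    "(\<Sum>v\<in>P. complex_of_real (r u v) * btens2 (R_leg1 u v) (R_leg2 u v) (a, b)) \<noteq> 0"
    using assms unfolding R_eq_sum_legs by (rule sum.not_neutral_contains_not_neutral)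
  moreover from this(2) obtain v where "v \<in> P"
    "complex_of_real (r u v) * btens2 (R_leg1 u v) (R_leg2 u v) (a, b) \<noteq> 0"
    by (rule sum.not_neutral_contains_not_neutral)
  ultimately show thesis
    using that unfolding btens2_def by (auto split: if_splits)
qed

lemma R_nonzero_eq:
  assumes "R (a, b) \<noteq> 0"
  shows "R (a, b) = complex_of_real (r (fp G P M a) (fp G P M b))"
  using assms by (elim R_nonzeroE) (simp add: R_at_legs)

lemma nonzero_R_R_mcoef_eq:
  assumes "complex_of_real x = R (a, b) * R (c, d) * mcoef G P M e f k" "x \<noteq> 0"
  shows "x = r (fp G P M a) (fp G P M b) * r (fp G P M c) (fp G P M d)"
proof -
  have ab: "R (a, b) \<noteq> 0" and cd: "R (c, d) \<noteq> 0" and m: "mcoef G P M e f k \<noteq> 0"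
    using assms by auto
  have "complex_of_real x = complex_of_real (r (fp G P M a) (fp G P M b) * r (fp G P M c) (fp G P M d))"
    using assms(1) unfolding R_nonzero_eq[OF ab] R_nonzero_eq[OF cd] mcoef_nonzero(1)[OF m] by simp
  then show ?thesis
    by (simp only: of_real_eq_iff)
qed

lemma sum_R13_R23_single:
  assumes k: "k1 \<in> carrier G" "k2 \<in> carrier G" "k3 \<in> carrier G"
  defines "g0 \<equiv> R_leg2 (fp G P M k1) (fp G P M k3)"
    and "g0' \<equiv> R_leg2 (fp G P M k2) (ract_pm G P M (fp G P M k3) (\<xi> (fp G P M k1)))"
  shows "(\<Sum>g\<in>carrier G. \<Sum>g'\<in>carrier G. R (k1, g) * R (k2, g') * mcoef G P M g g' k3)
    = R (k1, g0) * R (k2, g0') * mcoef G P M g0 g0' k3"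
proof (rule sum_sum_eq_single[OF finite_carrier])
  fix g g' assume g: "g \<in> carrier G" "g' \<in> carrier G"
    and nz: "R (k1, g) * R (k2, g') * mcoef G P M g g' k3 \<noteq> 0"
  then have "R (k1, g) \<noteq> 0" "R (k2, g') \<noteq> 0" and m: "mcoef G P M g g' k3 \<noteq> 0"
    by auto
  obtain u1 v1 where uv1: "u1 \<in> P" "v1 \<in> P" "k1 = R_leg1 u1 v1" "g = R_leg2 u1 v1"
    using \<open>R (k1, g) \<noteq> 0\<close> by (rule R_nonzeroE)
  obtain u2 v2 where uv2: "u2 \<in> P" "v2 \<in> P" "k2 = R_leg1 u2 v2" "g' = R_leg2 u2 v2"
    using \<open>R (k2, g') \<noteq> 0\<close> by (rule R_nonzeroE)
  have "v1 = fp G P M k3"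
    using fp_mcoef_nonzero[OF g m] uv1 by simp
  moreover have "v2 = ract_pm G P M v1 (\<xi> u1)"
    using mcoef_nonzero(2)[OF m] uv1 uv2 by simp
  ultimately show "g = g0 \<and> g' = g0'"
    using uv1 uv2 unfolding g0_def g0'_def by simp
qed (use k in \<open>simp_all add: g0_def g0'_def\<close>)

lemma sum_R13_R12_single:
  assumes k: "k1 \<in> carrier G" "k2 \<in> carrier G" "k3 \<in> carrier G"
  defines "g0 \<equiv> R_leg1 (fp G P M k1) (fp G P M k3)"
    and "g0' \<equiv> R_leg1 (ract_pm G P M (fp G P M k1) (fm G P M (R_leg1 (fp G P M k1) (fp G P M k3))))
      (fp G P M k2)"
  shows "(\<Sum>g\<in>carrier G. \<Sum>g'\<in>carrier G. R (g, k3) * R (g', k2) * mcoef G P M g g' k1)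
    = R (g0, k3) * R (g0', k2) * mcoef G P M g0 g0' k1"
proof (rule sum_sum_eq_single[OF finite_carrier])
  fix g g' assume g: "g \<in> carrier G" "g' \<in> carrier G"
    and nz: "R (g, k3) * R (g', k2) * mcoef G P M g g' k1 \<noteq> 0"
  then have "R (g, k3) \<noteq> 0" "R (g', k2) \<noteq> 0" and m: "mcoef G P M g g' k1 \<noteq> 0"
    by auto
  obtain u1 v1 where uv1: "u1 \<in> P" "v1 \<in> P" "g = R_leg1 u1 v1" "k3 = R_leg2 u1 v1"
    using \<open>R (g, k3) \<noteq> 0\<close> by (rule R_nonzeroE)
  obtain u2 v2 where uv2: "u2 \<in> P" "v2 \<in> P" "g' = R_leg1 u2 v2" "k2 = R_leg2 u2 v2"
    using \<open>R (g', k2) \<noteq> 0\<close> by (rule R_nonzeroE)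
  have "u1 = fp G P M k1"
    using fp_mcoef_nonzero[OF g m] uv1 by simp
  moreover have "u2 = ract_pm G P M u1 (fm G P M g)"
    using mcoef_nonzero(2)[OF m] uv1 uv2 by simp
  ultimately show "g = g0 \<and> g' = g0'"
    using uv1 uv2 unfolding g0_def g0'_def by simp
qed (use k in \<open>simp_all add: g0_def g0'_def\<close>)

end

locale quasitriangular_R_ansatz = R_ansatz G P M \<xi> \<eta> r R
  for G (structure) and P M \<xi> \<eta> r R +
  assumes Delta_id_R: "(\<lambda>(k1,k2,k3). \<Sum>g\<in>carrier G. R (g,k3) * dcoef G P M g k1 k2)
        = mul3 G P M (\<lambda>(k1,k2,k3). R (k1,k3) * hunit P k2) (\<lambda>(k1,k2,k3). hunit P k1 * R (k2,k3))"
    and id_Delta_R: "(\<lambda>(k1,k2,k3). \<Sum>g\<in>carrier G. R (k1,g) * dcoef G P M g k2 k3)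
        = mul3 G P M (\<lambda>(k1,k2,k3). R (k1,k3) * hunit P k2) (\<lambda>(k1,k2,k3). R (k1,k2) * hunit P k3)"
begin

lemma Delta_id_R_coeff:
  assumes "k1 \<in> carrier G" "k2 \<in> carrier G"
  shows "(if fm G P M k1 = lact_pm G P M (fp G P M k2) (fm G P M k2) then R (fp G P M k1 \<otimes> k2, k3) else 0)
    = (\<Sum>g\<in>carrier G. \<Sum>h\<in>carrier G. R (k1, g) * R (k2, h) * mcoef G P M g h k3)"
  using fun_cong[OF Delta_id_R, of "(k1, k2, k3)"] assms
  by (simp add: sum_dcoef mul3_R13_R23)

lemma id_Delta_R_coeff:
  assumes "k2 \<in> carrier G" "k3 \<in> carrier G"
  shows "(if fm G P M k2 = lact_pm G P M (fp G P M k3) (fm G P M k3) then R (k1, fp G P M k2 \<otimes> k3) else 0)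
    = (\<Sum>g\<in>carrier G. \<Sum>h\<in>carrier G. R (g, k3) * R (h, k2) * mcoef G P M g h k1)"
  using fun_cong[OF id_Delta_R, of "(k1, k2, k3)"] assms
  by (simp add: sum_dcoef mul3_R13_R12)

lemma r_mult_left:
  assumes w: "w \<in> P" and h: "h \<in> P" and v: "v \<in> P"
  shows "r (w \<otimes> h) v = r w v * r h (ract_pm G P M v (\<xi> w))"
proof -
  define u a where "u = w \<otimes> h" and "a = inv (ract_mp G P M (\<eta> v) u)"
  define k1 k2 k3 where "k1 = w \<otimes> lact_pm G P M h a" and "k2 = h \<otimes> a" and "k3 = R_leg2 u v"
  define v' where "v' = ract_pm G P M v (\<xi> w)"
  have u: "u \<in> P" and a: "a \<in> M" and v': "v' \<in> P"
    using assms unfolding u_def a_def v'_def by simp_all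
  have k: "k1 \<in> carrier G" "k2 \<in> carrier G" "k3 \<in> carrier G"
    and fpk: "fp G P M k1 = w" "fp G P M k2 = h" "fp G P M k3 = v"
    and fmk: "fm G P M k1 = lact_pm G P M h a" "fm G P M k2 = a"
    using assms u a unfolding k1_def k2_def k3_def by simp_all
  have "fp G P M k1 \<otimes> k2 = R_leg1 u v"
    using assms a unfolding fpk k2_def R_leg1_def u_def a_def by (simp add: m_assoc)
  then have "complex_of_real (r u v)
      = R (k1, R_leg2 w v) * R (k2, R_leg2 h v') * mcoef G P M (R_leg2 w v) (R_leg2 h v') k3"
    using Delta_id_R_coeff[OF k(1,2), of k3] sum_R13_R23_single[OF k] fpk fmk R_at_legs[OF u v]
    unfolding k3_def v'_def by simp
  then have "r u v = r (fp G P M k1) (fp G P M (R_leg2 w v)) * r (fp G P M k2) (fp G P M (R_leg2 h v'))"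
    by (rule nonzero_R_R_mcoef_eq) (use r_pos u v in \<open>auto simp: less_le\<close>)
  then show ?thesis
    using assms v' fpk unfolding u_def v'_def by simp
qed

lemma r_mult_right:
  assumes u: "u \<in> P" and v: "v \<in> P" and k: "k \<in> P"
  shows "r u v = r u k * r (ract_pm G P M u (fm G P M (R_leg1 u k))) (v \<otimes> inv k)"
proof -
  define c v' where "c = ract_pm G P M u (fm G P M (R_leg1 u k))" and "v' = v \<otimes> inv k"
  define k1 k2 k3 where "k1 = R_leg1 u v" and "k2 = v' \<otimes> lact_pm G P M k (\<xi> u)" and "k3 = R_leg2 u k"
  have c: "c \<in> P" and v': "v' \<in> P" and "v' \<otimes> k = v"
    using assms unfolding c_def v'_def by (simp_all add: m_assoc)
  have k: "k1 \<in> carrier G" "k2 \<in> carrier G" "k3 \<in> carrier G"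
    and fpk: "fp G P M k1 = u" "fp G P M k2 = v'" "fp G P M k3 = k"
    and fmk: "fm G P M k2 = lact_pm G P M k (\<xi> u)" "fm G P M k3 = \<xi> u"
    using assms v' unfolding k1_def k2_def k3_def by simp_all
  have "fp G P M k2 \<otimes> k3 = R_leg2 u v"
    using assms v' \<open>v' \<otimes> k = v\<close> unfolding fpk k3_def R_leg2_def by (simp add: m_assoc[symmetric])
  then have "complex_of_real (r u v)
      = R (R_leg1 u k, k3) * R (R_leg1 c v', k2) * mcoef G P M (R_leg1 u k) (R_leg1 c v') k1"
    using id_Delta_R_coeff[OF k(2,3), of k1] sum_R13_R12_single[OF k] fpk fmk R_at_legs[OF u v]
    unfolding k1_def c_def by simp
  then have "r u v = r (fp G P M (R_leg1 u k)) (fp G P M k3) * r (fp G P M (R_leg1 c v')) (fp G P M k2)"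
    by (rule nonzero_R_R_mcoef_eq) (use r_pos u v in \<open>auto simp: less_le\<close>)
  then show ?thesis
    using assms c v' fpk unfolding c_def v'_def by simp
qed

lemma prod_r_mult_left:
  assumes w: "w \<in> P" and h: "h \<in> P"
  shows "(\<Prod>v\<in>P. r (w \<otimes> h) v) = (\<Prod>v\<in>P. r w v) * (\<Prod>v\<in>P. r h v)"
proof -
  have "(\<Prod>v\<in>P. r (w \<otimes> h) v) = (\<Prod>v\<in>P. r w v) * (\<Prod>v\<in>P. r h (ract_pm G P M v (\<xi> w)))"
    using assms by (simp add: r_mult_left prod.distrib)
  also have "(\<Prod>v\<in>P. r h (ract_pm G P M v (\<xi> w))) = (\<Prod>v\<in>P. r h v)"
    using prod.reindex_bij_betw[OF bij_betw_ract_pm[of "\<xi> w"]] w by simp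
  finally show ?thesis .
qed

lemma prod_r_eq_1:
  assumes h: "h \<in> P"
  shows "(\<Prod>v\<in>P. r h v) = 1"
proof -
  define D where "D u = (\<Prod>v\<in>P. r u v)" for u
  have D_pos: "D u > 0" if "u \<in> P" for u
    using r_pos that unfolding D_def by (simp add: prod_pos)
  have "(\<Prod>w\<in>P. D w) = (\<Prod>w\<in>P. D (w \<otimes> h))"
    using prod.reindex_bij_betw[OF bij_betw_P_mult_right[OF h], of D] by simp
  also have "\<dots> = (\<Prod>w\<in>P. D w) * D h ^ card P"
    using h unfolding D_def by (simp add: prod_r_mult_left prod.distrib)
  finally have "(\<Prod>w\<in>P. D w) = 0 \<or> D h ^ card P = 1"
    by (simp only: mult_cancel_left1)
  moreover have "(\<Prod>w\<in>P. D w) > 0"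
    using D_pos by (rule prod_pos)
  ultimately have "D h ^ card P = 1"
    by auto
  with D_pos[OF h] P.finite_imp_card_positive[OF finite_carrier] have "D h = 1"
    by (rule pos_real_power_eq_1)
  then show ?thesis
    unfolding D_def .
qed

lemma r_eq_1:
  assumes u: "u \<in> P" and k: "k \<in> P"
  shows "r u k = 1"
proof -
  define c where "c = ract_pm G P M u (fm G P M (R_leg1 u k))"
  have c: "c \<in> P"
    using assms unfolding c_def by simp
  have "1 = (\<Prod>v\<in>P. r u v)"
    using prod_r_eq_1[OF u] ..
  also have "\<dots> = (\<Prod>v\<in>P. r u k * r c (v \<otimes> inv k))"
  proof (rule prod.cong)
    fix v assume "v \<in> P"
    then show "r u v = r u k * r c (v \<otimes> inv k)"
      unfolding c_def by (rule r_mult_right[OF u _ k])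
  qed (rule refl)
  also have "\<dots> = r u k ^ card P * (\<Prod>v\<in>P. r c (v \<otimes> inv k))"
    by (simp add: prod.distrib)
  also have "(\<Prod>v\<in>P. r c (v \<otimes> inv k)) = 1"
    using prod.reindex_bij_betw[OF bij_betw_P_mult_right[of "inv k"], of "r c"] prod_r_eq_1[OF c] k by simp
  finally have "r u k ^ card P = 1"
    by (metis mult_1_right)
  moreover have "0 < r u k"
    using r_pos assms by blast
  ultimately show ?thesis
    using P.finite_imp_card_positive[OF finite_carrier] pos_real_power_eq_1 by blast
qed

end

theorem proposition5:
  fixes G :: "('a,'b) monoid_scheme" and Gp Gm :: "'a set"
    and \<xi> \<eta> :: "'a \<Rightarrow> 'a" and r :: "'a \<Rightarrow> 'a \<Rightarrow> real"
    and R :: "'a \<times> 'a \<Rightarrow> complex"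
  assumes "group G" and "finite (carrier G)"
    and "unique_factorization G Gp Gm"
    and "\<forall>u\<in>Gp. \<xi> u \<in> Gm" and "\<forall>u\<in>Gp. \<eta> u \<in> Gm"
    and "\<forall>u\<in>Gp. \<forall>v\<in>Gp. r u v > 0"
    and "R = (\<lambda>k. \<Sum>u\<in>Gp. \<Sum>v\<in>Gp. complex_of_real (r u v) *
            btens2 (u \<otimes>\<^bsub>G\<^esub> inv\<^bsub>G\<^esub> (ract_mp G Gp Gm (\<eta> v) u)) (v \<otimes>\<^bsub>G\<^esub> \<xi> u) k)"
    and "quasi_triangular G Gp Gm R"
    and "positive2 R"
  shows "\<forall>u\<in>Gp. \<forall>v\<in>Gp. r u v = 1"
proof -
  have "quasitriangular_R_ansatz_axioms G Gp Gm R"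
    using assms(8) unfolding quasi_triangular_def quasitriangular_R_ansatz_axioms_def
    by (elim conjE) (intro conjI; assumption)
  then interpret quasitriangular_R_ansatz G Gp Gm \<xi> \<eta> r R
    by (intro quasitriangular_R_ansatz.intro R_ansatz.intro R_ansatz_axioms.intro
        finite_factorized_group.intro finite_factorized_group_axioms.intro
        factorized_group.intro factorized_group_axioms.intro assms(1-7))
  show ?thesis
    by (intro ballI r_eq_1)
qed

end
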